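(* Let $\ket T=2^{-1/2}(\ket0+e^{i\pi/4}\ket1)$ and $m\ge1$. Then $$\xi(\ket T^{\otimes m})=(\cos(\pi/8))^{-2m}\quad\text{and}\quad F_{\mathcal S}(\ket T^{\otimes m})=(\cos(\pi/8))^{2m}.$$
   Context: $\mathcal S_m$ is the set of $m$-qubit stabilizer states (states $C\ket{0^m}$ with $C$ a product of Hadamard, phase and CNOT gates). The stabilizer extent is $\xi(\ket\psi)=\min\{\|c\|_1^2:\ket\psi=\sum_ic_i\ket{\phi_i},\ \ket{\phi_i}\in\mathcal S_m\}$ and the stabilizer fidelity is $F_{\mathcal S}(\ket\psi)=\max_{\ket\phi\in\mathcal S_m}|\braket{\phi|\psi}|^2$. *)

theory Defs
  imports "HOL-Analysis.Analysis"
begin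

text \<open>An m-qubit state vector is represented by its amplitudes
  psi :: nat => complex, indexed by computational basis states x < 2^m
  (bit j of x is the value of qubit j); amplitudes at x >= 2^m are 0.\<close>

type_synonym qvec = "nat \<Rightarrow> complex"

definition ket0 :: qvec where
  "ket0 = (\<lambda>x. if x = 0 then 1 else 0)"

definition hadamard :: "nat \<Rightarrow> qvec \<Rightarrow> qvec" where
  "hadamard j psi = (\<lambda>x. (if bit x j then psi (unset_bit j x) - psi x
                           else psi x + psi (set_bit j x)) / complex_of_real (sqrt 2))"

definition phase_gate :: "nat \<Rightarrow> qvec \<Rightarrow> qvec" where
  "phase_gate j psi = (\<lambda>x. if bit x j then \<i> * psi x else psi x)"

definition cnot :: "nat \<Rightarrow> nat \<Rightarrow> qvec \<Rightarrow> qvec" where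
  "cnot c t psi = (\<lambda>x. if bit x c then psi (flip_bit t x) else psi x)"

inductive_set stab_states :: "nat \<Rightarrow> qvec set" for m :: nat where
  base: "ket0 \<in> stab_states m"
| had: "psi \<in> stab_states m \<Longrightarrow> j < m \<Longrightarrow> hadamard j psi \<in> stab_states m"
| phs: "psi \<in> stab_states m \<Longrightarrow> j < m \<Longrightarrow> phase_gate j psi \<in> stab_states m"
| cx: "psi \<in> stab_states m \<Longrightarrow> c < m \<Longrightarrow> t < m \<Longrightarrow> c \<noteq> t \<Longrightarrow> cnot c t psi \<in> stab_states m"

definition inner_q :: "nat \<Rightarrow> qvec \<Rightarrow> qvec \<Rightarrow> complex" where
  "inner_q m phi psi = (\<Sum>x<2^m. cnj (phi x) * psi x)"

definition stab_extent :: "nat \<Rightarrow> qvec \<Rightarrow> real" where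
  "stab_extent m psi = Inf {(\<Sum>i<n. cmod (c i))^2 | (n::nat) (c::nat \<Rightarrow> complex) (phi::nat \<Rightarrow> qvec).
      (\<forall>i<n. phi i \<in> stab_states m) \<and> psi = (\<lambda>x. \<Sum>i<n. c i * phi i x)}"

definition stab_fidelity :: "nat \<Rightarrow> qvec \<Rightarrow> real" where
  "stab_fidelity m psi = Sup {(cmod (inner_q m phi psi))^2 | phi. phi \<in> stab_states m}"

definition T_state :: qvec where
  "T_state = (\<lambda>x. if x = 0 then 1 / complex_of_real (sqrt 2)
                  else if x = 1 then cis (pi/4) / complex_of_real (sqrt 2) else 0)"

text \<open>Tensor power |T>^{\<otimes> m}; the new factor is qubit m (bit m).\<close>
fun T_pow :: "nat \<Rightarrow> qvec" where
  "T_pow 0 = ket0"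
| "T_pow (Suc m) = (\<lambda>x. T_pow m (x mod 2^m) * T_state (x div 2^m))"

end

theory Submission
  imports Defs
begin

text \<open>The density matrix of every stabilizer state has the form \<open>2\<^sup>-\<^sup>m \<Sum>(v\<in>V) s\<^sub>v P\<^sub>v\<close>, where
  \<open>P\<^sub>v\<close> ranges over the Pauli operators labelled by an affine set \<open>V\<close> of \<open>2\<^sup>m\<close> labels and
  \<open>|s\<^sub>v| \<le> 1\<close>: this holds for \<open>|0\<^sup>m\<rangle>\<close>, and \<open>H\<close>, \<open>S\<close>, \<open>CNOT\<close> permute Pauli operators up to
  phases by linear maps of the labels. Hence \<open>|\<langle>\<phi>|T\<^sup>\<otimes>\<^sup>m\<rangle>|\<^sup>2 \<le> 2\<^sup>-\<^sup>m \<Sum>(v\<in>V) |\<langle>T\<^sup>\<otimes>\<^sup>m|P\<^sub>v|T\<^sup>\<otimes>\<^sup>m\<rangle>|\<close>,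
  and the expectations factor into single-qubit weights \<open>1\<close> for \<open>I\<close>, \<open>0\<close> for \<open>Z\<close> and
  \<open>1/\<surd>2\<close> for \<open>X\<close>, \<open>Y\<close>. Splitting off one qubit at a time, such weights sum to at most
  \<open>(1 + 1/\<surd>2)\<^sup>m\<close> over an affine set of size \<open>2\<^sup>m\<close>, so the fidelity is at most
  \<open>((1 + 1/\<surd>2)/2)\<^sup>m = cos\<^sup>2\<^sup>m(\<pi>/8)\<close>, which \<open>|+\<rangle>\<^sup>\<otimes>\<^sup>m\<close> attains.

  For the extent, \<open>|T\<rangle> = \<alpha>|+\<rangle> + \<beta> S|+\<rangle>\<close> with \<open>(|\<alpha>| + |\<beta>|)\<^sup>2 = cos\<^sup>-\<^sup>2(\<pi>/8)\<close>, and expanding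
  the tensor power gives a decomposition of \<open>l\<^sub>1\<close>-norm \<open>cos\<^sup>-\<^sup>m(\<pi>/8)\<close>. Conversely, for any
  decomposition \<open>1 = \<langle>T\<^sup>\<otimes>\<^sup>m|T\<^sup>\<otimes>\<^sup>m\<rangle> = \<Sum> c\<^sub>i \<langle>T\<^sup>\<otimes>\<^sup>m|\<phi>\<^sub>i\<rangle> \<le> \<Sum> |c\<^sub>i| cos\<^sup>m(\<pi>/8)\<close>.\<close>

section \<open>Bit strings\<close>

lemma less_two_power_iff_bits: "(a::nat) < 2^m \<longleftrightarrow> (\<forall>i\<ge>m. \<not> bit a i)"
proof -
  have "a < 2^m \<longleftrightarrow> take_bit m a = a" by (simp add: take_bit_nat_eq_self_iff)
  also have "\<dots> \<longleftrightarrow> (\<forall>i. bit (take_bit m a) i = bit a i)" by (simp add: bit_eq_iff)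
  also have "\<dots> \<longleftrightarrow> (\<forall>i\<ge>m. \<not> bit a i)"
    unfolding bit_take_bit_iff by (meson not_le)
  finally show ?thesis .
qed

lemma eq_zero_iff_low_bits:
  "(a::nat) < 2^m \<Longrightarrow> a = 0 \<longleftrightarrow> (\<forall>i<m. \<not> bit a i)"
  unfolding less_two_power_iff_bits by (auto simp: bit_eq_iff) (metis not_le)

lemma xor_less_two_power: "(a::nat) < 2^m \<Longrightarrow> b < 2^m \<Longrightarrow> xor a b < 2^m"
  by (simp add: less_two_power_iff_bits bit_xor_iff)

lemma xor_right_cancel: "xor (a::nat) c = xor b c \<Longrightarrow> a = b"
  by (metis bit_xor_iff bit_eq_iff)

definition put_bit :: "nat \<Rightarrow> bool \<Rightarrow> nat \<Rightarrow> nat" where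
  "put_bit j u r = (if u then set_bit j r else unset_bit j r)"

lemma bit_put_bit: "bit (put_bit j u r) i = (if i = j then u else bit r i)"
  by (auto simp: put_bit_def bit_set_bit_iff bit_unset_bit_iff)

lemma put_bit_less_two_power_iff: "j < m \<Longrightarrow> put_bit j u r < 2^m \<longleftrightarrow> r < 2^m"
  unfolding less_two_power_iff_bits bit_put_bit by auto

lemma set_bit_same: "bit (a::nat) j \<Longrightarrow> set_bit j a = a"
  by (rule bit_eqI) (auto simp: bit_set_bit_iff)

lemma unset_bit_same: "\<not> bit (a::nat) j \<Longrightarrow> unset_bit j a = a"
  by (rule bit_eqI) (auto simp: bit_unset_bit_iff)

lemma sum_prod_bits:
  fixes h :: "nat \<Rightarrow> bool \<Rightarrow> 'a::comm_semiring_1"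
  shows "(\<Sum>s<(2::nat)^m. \<Prod>j<m. h j (bit s j)) = (\<Prod>j<m. h j False + h j True)"
proof (induction m arbitrary: h)
  case 0 then show ?case by simp
next
  case (Suc m)
  have "{..<(2::nat)^Suc m} = (\<lambda>x. 2 * x) ` {..<2^m} \<union> (\<lambda>x. 2 * x + 1) ` {..<2^m}"
  proof (rule set_eqI, rule iffI)
    fix x :: nat assume "x \<in> {..<2^Suc m}"
    then show "x \<in> (\<lambda>x. 2 * x) ` {..<2^m} \<union> (\<lambda>x. 2 * x + 1) ` {..<2^m}"
      by (cases "even x") (auto elim!: evenE oddE)
  qed auto
  moreover have "(\<lambda>x::nat. 2 * x) ` {..<2^m} \<inter> (\<lambda>x. 2 * x + 1) ` {..<2^m} = {}"
    by auto presburger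
  ultimately have "(\<Sum>s<(2::nat)^Suc m. \<Prod>j<Suc m. h j (bit s j))
      = (\<Sum>s<(2::nat)^m. \<Prod>j<Suc m. h j (bit (2 * s) j))
      + (\<Sum>s<(2::nat)^m. \<Prod>j<Suc m. h j (bit (2 * s + 1) j))"
    by (simp add: sum.union_disjoint sum.reindex inj_on_def)
  also have "\<dots> = (\<Sum>s<(2::nat)^m. h 0 False * (\<Prod>j<m. h (Suc j) (bit s j)))
      + (\<Sum>s<(2::nat)^m. h 0 True * (\<Prod>j<m. h (Suc j) (bit s j)))"
    unfolding prod.lessThan_Suc_shift by (simp add: bit_Suc bit_0)
  also have "\<dots> = (h 0 False + h 0 True) * (\<Sum>s<(2::nat)^m. \<Prod>j<m. h (Suc j) (bit s j))"
    by (simp add: sum_distrib_left distrib_right sum.distrib)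
  also have "\<dots> = (\<Prod>j<Suc m. h j False + h j True)"
    unfolding Suc.IH[of "\<lambda>j. h (Suc j)"] prod.lessThan_Suc_shift ..
  finally show ?case .
qed


section \<open>Conjugating tensor-product operators by Clifford gates\<close>

type_synonym qop = "nat \<Rightarrow> nat \<Rightarrow> complex"

definition density :: "qvec \<Rightarrow> qop" where
  "density \<phi> r c = \<phi> r * cnj (\<phi> c)"

definition tensor_op :: "nat \<Rightarrow> (nat \<Rightarrow> bool \<Rightarrow> bool \<Rightarrow> complex) \<Rightarrow> qop" where
  "tensor_op m f r c = (if r < 2^m \<and> c < 2^m then \<Prod>i<m. f i (bit r i) (bit c i) else 0)"

lemma tensor_op_remove:
  "j < m \<Longrightarrow> r < 2^m \<Longrightarrow> c < 2^m \<Longrightarrow>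
   tensor_op m f r c = f j (bit r j) (bit c j) * (\<Prod>i\<in>{..<m}-{j}. f i (bit r i) (bit c i))"
  unfolding tensor_op_def by (simp add: prod.remove)

lemma prod_remove_fun_upd:
  "(\<Prod>i\<in>A-{j}. (f(j := g)) i (X i) (Y i)) = (\<Prod>i\<in>A-{j}. f i (X i) (Y i))"
  by (rule prod.cong) auto

lemma tensor_op_fun_upd_scale:
  assumes "j < m" and "\<And>\<rho> \<gamma>. g' \<rho> \<gamma> = k * g \<rho> \<gamma>"
  shows "tensor_op m (f(j := g')) r c = k * tensor_op m (f(j := g)) r c"
proof (cases "r < 2^m \<and> c < 2^m")
  case True
  then show ?thesis
    using tensor_op_remove[OF \<open>j < m\<close>, of r c] by (simp add: prod_remove_fun_upd assms(2))
next
  case False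
  then show ?thesis unfolding tensor_op_def if_not_P[OF False] by simp
qed

text \<open>Entries of \<open>\<surd>2 H\<close>.\<close>

definition had_entry :: "bool \<Rightarrow> bool \<Rightarrow> complex" where
  "had_entry \<rho> u = (if \<rho> \<and> u then -1 else 1)"

lemma hadamard_eq_sum:
  "hadamard j \<phi> r = (\<Sum>u\<in>UNIV. had_entry (bit r j) u * \<phi> (put_bit j u r)) / sqrt 2"
  by (auto simp: hadamard_def had_entry_def put_bit_def UNIV_bool set_bit_same unset_bit_same)

definition had_conj :: "nat \<Rightarrow> qop \<Rightarrow> qop" where
  "had_conj j K r c = (\<Sum>u\<in>UNIV. \<Sum>u'\<in>UNIV.
     had_entry (bit r j) u * had_entry (bit c j) u' * K (put_bit j u r) (put_bit j u' c)) / 2"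

definition had_conj1 :: "(bool \<Rightarrow> bool \<Rightarrow> complex) \<Rightarrow> bool \<Rightarrow> bool \<Rightarrow> complex" where
  "had_conj1 g \<rho> \<gamma> = (\<Sum>u\<in>UNIV. \<Sum>u'\<in>UNIV. had_entry \<rho> u * had_entry \<gamma> u' * g u u') / 2"

lemma density_hadamard: "density (hadamard j \<phi>) = had_conj j (density \<phi>)"
proof (intro ext)
  fix r c
  have s2: "complex_of_real (sqrt 2) * complex_of_real (sqrt 2) = 2"
    unfolding of_real_mult[symmetric] by simp
  have "cnj (had_entry a b) = had_entry a b" for a b by (simp add: had_entry_def)
  then show "density (hadamard j \<phi>) r c = had_conj j (density \<phi>) r c"
    by (simp add: density_def had_conj_def hadamard_eq_sum s2 sum_product mult_ac)
qed

lemma had_conj_tensor_op: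
  assumes j: "j < m"
  shows "had_conj j (tensor_op m f) = tensor_op m (f(j := had_conj1 (f j)))"
proof (intro ext)
  fix r c
  show "had_conj j (tensor_op m f) r c = tensor_op m (f(j := had_conj1 (f j))) r c"
  proof (cases "r < 2^m \<and> c < 2^m")
    case True
    let ?R = "\<Prod>i\<in>{..<m}-{j}. f i (bit r i) (bit c i)"
    have "tensor_op m f (put_bit j u r) (put_bit j u' c) = f j u u' * ?R" for u u'
    proof -
      have "(\<Prod>i\<in>{..<m}-{j}. f i (bit (put_bit j u r) i) (bit (put_bit j u' c) i)) = ?R"
        by (rule prod.cong) (auto simp: bit_put_bit)
      then show ?thesis
        using tensor_op_remove[OF j] True put_bit_less_two_power_iff[OF j] by (simp add: bit_put_bit)
    qed
    moreover have "tensor_op m (f(j := had_conj1 (f j))) r c = had_conj1 (f j) (bit r j) (bit c j) * ?R"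
      using tensor_op_remove[OF j, of r c "f(j := had_conj1 (f j))"] True
      by (simp add: prod_remove_fun_upd)
    ultimately show ?thesis
      unfolding had_conj_def had_conj1_def by (simp add: UNIV_bool algebra_simps add_divide_distrib)
  qed (auto simp: had_conj_def tensor_op_def put_bit_less_two_power_iff[OF j])
qed

lemma had_conj_sum:
  "had_conj j (\<lambda>r c. (\<Sum>v\<in>V. s v * K v r c) / D) = (\<lambda>r c. (\<Sum>v\<in>V. s v * had_conj j (K v) r c) / D)"
  by (intro ext) (simp add: had_conj_def UNIV_bool sum_distrib_left sum_divide_distrib
      sum.distrib algebra_simps add_divide_distrib)

definition phase_entry :: "bool \<Rightarrow> complex" where
  "phase_entry \<rho> = (if \<rho> then \<i> else 1)"

definition phase_conj :: "nat \<Rightarrow> qop \<Rightarrow> qop" where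
  "phase_conj j K r c = phase_entry (bit r j) * cnj (phase_entry (bit c j)) * K r c"

lemma density_phase_gate: "density (phase_gate j \<phi>) = phase_conj j (density \<phi>)"
  by (intro ext) (simp add: density_def phase_conj_def phase_gate_def phase_entry_def)

lemma phase_conj_tensor_op:
  assumes j: "j < m"
  shows "phase_conj j (tensor_op m f)
       = tensor_op m (f(j := (\<lambda>\<rho> \<gamma>. phase_entry \<rho> * cnj (phase_entry \<gamma>) * f j \<rho> \<gamma>)))"
proof (intro ext)
  fix r c
  show "phase_conj j (tensor_op m f) r c
      = tensor_op m (f(j := (\<lambda>\<rho> \<gamma>. phase_entry \<rho> * cnj (phase_entry \<gamma>) * f j \<rho> \<gamma>))) r c"
  proof (cases "r < 2^m \<and> c < 2^m")
    case True
    then show ?thesis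
      using tensor_op_remove[OF j, of r c f]
        tensor_op_remove[OF j, of r c "f(j := (\<lambda>\<rho> \<gamma>. phase_entry \<rho> * cnj (phase_entry \<gamma>) * f j \<rho> \<gamma>))"]
      by (simp add: phase_conj_def prod_remove_fun_upd)
  next
    case False
    then show ?thesis unfolding phase_conj_def tensor_op_def if_not_P[OF False] by simp
  qed
qed

lemma phase_conj_sum:
  "phase_conj j (\<lambda>r c. (\<Sum>v\<in>V. s v * K v r c) / D) = (\<lambda>r c. (\<Sum>v\<in>V. s v * phase_conj j (K v) r c) / D)"
  by (intro ext) (simp add: phase_conj_def sum_distrib_left sum_divide_distrib algebra_simps)

definition cnot_index :: "nat \<Rightarrow> nat \<Rightarrow> nat \<Rightarrow> nat" where
  "cnot_index c t r = (if bit r c then flip_bit t r else r)"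

lemma bit_cnot_index:
  "c \<noteq> t \<Longrightarrow> bit (cnot_index c t r) i = (if i = t then bit r t \<noteq> bit r c else bit r i)"
  by (auto simp: cnot_index_def bit_flip_bit_iff)

lemma cnot_index_less_two_power_iff: "t < m \<Longrightarrow> cnot_index c t r < 2^m \<longleftrightarrow> r < 2^m"
  by (auto simp: cnot_index_def less_two_power_iff_bits bit_flip_bit_iff)

lemma density_cnot: "density (cnot c t \<phi>) r d = density \<phi> (cnot_index c t r) (cnot_index c t d)"
  by (simp add: density_def cnot_def cnot_index_def)

lemma tensor_op_remove2:
  assumes "c < m" "t < m" "c \<noteq> t" "r < 2^m" "d < 2^m"
  shows "tensor_op m f r d = f c (bit r c) (bit d c) * f t (bit r t) (bit d t)
           * (\<Prod>i\<in>{..<m}-{c}-{t}. f i (bit r i) (bit d i))"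
proof -
  have "tensor_op m f r d = f c (bit r c) (bit d c) * (\<Prod>i\<in>{..<m}-{c}. f i (bit r i) (bit d i))"
    using assms by (simp add: tensor_op_remove)
  also have "(\<Prod>i\<in>{..<m}-{c}. f i (bit r i) (bit d i))
      = f t (bit r t) (bit d t) * (\<Prod>i\<in>{..<m}-{c}-{t}. f i (bit r i) (bit d i))"
    using assms by (subst prod.remove[of "{..<m}-{c}" t]) auto
  finally show ?thesis by (simp add: mult.assoc)
qed

lemma tensor_op_cnot_index:
  assumes c: "c < m" and t: "t < m" and ct: "c \<noteq> t"
    and other: "\<And>i. i \<noteq> c \<Longrightarrow> i \<noteq> t \<Longrightarrow> f' i = f i"
    and pair: "\<And>\<rho>c \<gamma>c \<rho>t \<gamma>t.
      f c \<rho>c \<gamma>c * f t (\<rho>t \<noteq> \<rho>c) (\<gamma>t \<noteq> \<gamma>c) = f' c \<rho>c \<gamma>c * f' t \<rho>t \<gamma>t"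
  shows "tensor_op m f (cnot_index c t r) (cnot_index c t d) = tensor_op m f' r d"
proof (cases "r < 2^m \<and> d < 2^m")
  case True
  have "tensor_op m f (cnot_index c t r) (cnot_index c t d)
      = f c (bit r c) (bit d c) * f t (bit r t \<noteq> bit r c) (bit d t \<noteq> bit d c)
        * (\<Prod>i\<in>{..<m}-{c}-{t}. f i (bit r i) (bit d i))"
    using tensor_op_remove2[OF c t ct, of "cnot_index c t r" "cnot_index c t d" f] True
      cnot_index_less_two_power_iff[OF t] ct
    by (simp add: bit_cnot_index)
  also have "(\<Prod>i\<in>{..<m}-{c}-{t}. f i (bit r i) (bit d i)) = (\<Prod>i\<in>{..<m}-{c}-{t}. f' i (bit r i) (bit d i))"
    by (rule prod.cong) (auto simp: other)
  also have "f c (bit r c) (bit d c) * f t (bit r t \<noteq> bit r c) (bit d t \<noteq> bit d c)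
      = f' c (bit r c) (bit d c) * f' t (bit r t) (bit d t)"
    by (rule pair)
  finally show ?thesis using tensor_op_remove2[OF c t ct, of r d f'] True by simp
next
  case False
  then have "\<not> (cnot_index c t r < 2^m \<and> cnot_index c t d < 2^m)"
    using cnot_index_less_two_power_iff[OF t] by simp
  with False show ?thesis unfolding tensor_op_def by (simp only: if_False)
qed


section \<open>Pauli expansion of stabilizer states\<close>

text \<open>The single-qubit Pauli operator \<open>X\<^sup>\<alpha> Z\<^sup>\<beta>\<close> as a matrix with row \<open>\<rho>\<close> and
  column \<open>\<gamma>\<close>; an \<open>m\<close>-qubit Pauli operator is labelled by the pair \<open>(x, z)\<close> of bit strings
  of its \<open>X\<close>- and \<open>Z\<close>-parts.\<close>

definition pauli1 :: "bool \<Rightarrow> bool \<Rightarrow> bool \<Rightarrow> bool \<Rightarrow> complex" where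
  "pauli1 \<alpha> \<beta> \<rho> \<gamma> = (if \<rho> = (\<gamma> \<noteq> \<alpha>) then (if \<beta> \<and> \<gamma> then -1 else 1) else 0)"

definition pauli :: "nat \<Rightarrow> nat \<times> nat \<Rightarrow> qop" where
  "pauli m v = tensor_op m (\<lambda>i. pauli1 (bit (fst v) i) (bit (snd v) i))"

lemma had_conj1_pauli1:
  "had_conj1 (pauli1 \<alpha> \<beta>) = (\<lambda>\<rho> \<gamma>. (if \<alpha> \<and> \<beta> then -1 else 1) * pauli1 \<beta> \<alpha> \<rho> \<gamma>)"
  by (intro ext) (cases \<alpha>; cases \<beta>; simp add: had_conj1_def pauli1_def had_entry_def UNIV_bool)

lemma phase_conj1_pauli1:
  "phase_entry \<rho> * cnj (phase_entry \<gamma>) * pauli1 \<alpha> \<beta> \<rho> \<gamma> = (if \<alpha> then \<i> else 1) * pauli1 \<alpha> (\<beta> \<noteq> \<alpha>) \<rho> \<gamma>"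
  by (cases \<alpha>; cases \<beta>; cases \<rho>; cases \<gamma>; simp add: pauli1_def phase_entry_def)

lemma cnot_conj_pauli1:
  "pauli1 \<alpha>c \<beta>c \<rho>c \<gamma>c * pauli1 \<alpha>t \<beta>t (\<rho>t \<noteq> \<rho>c) (\<gamma>t \<noteq> \<gamma>c)
     = pauli1 \<alpha>c (\<beta>c \<noteq> \<beta>t) \<rho>c \<gamma>c * pauli1 (\<alpha>t \<noteq> \<alpha>c) \<beta>t \<rho>t \<gamma>t"
  by (cases \<alpha>c; cases \<beta>c; cases \<rho>c; cases \<gamma>c; cases \<alpha>t; cases \<beta>t; cases \<rho>t; cases \<gamma>t;
      simp add: pauli1_def)

definition had_label :: "nat \<Rightarrow> nat \<times> nat \<Rightarrow> nat \<times> nat" where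
  "had_label j v = (if bit (fst v) j = bit (snd v) j then v
                    else (flip_bit j (fst v), flip_bit j (snd v)))"

definition had_sign :: "nat \<Rightarrow> nat \<times> nat \<Rightarrow> complex" where
  "had_sign j v = (if bit (fst v) j \<and> bit (snd v) j then -1 else 1)"

definition phase_label :: "nat \<Rightarrow> nat \<times> nat \<Rightarrow> nat \<times> nat" where
  "phase_label j v = (fst v, if bit (fst v) j then flip_bit j (snd v) else snd v)"

definition phase_sign :: "nat \<Rightarrow> nat \<times> nat \<Rightarrow> complex" where
  "phase_sign j v = (if bit (fst v) j then \<i> else 1)"

definition cnot_label :: "nat \<Rightarrow> nat \<Rightarrow> nat \<times> nat \<Rightarrow> nat \<times> nat" where
  "cnot_label c t v = (if bit (fst v) c then flip_bit t (fst v) else fst v,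
                       if bit (snd v) t then flip_bit c (snd v) else snd v)"

lemma bit_had_label:
  "bit (fst (had_label j v)) i = (if i = j then bit (snd v) j else bit (fst v) i)"
  "bit (snd (had_label j v)) i = (if i = j then bit (fst v) j else bit (snd v) i)"
  by (auto simp: had_label_def bit_flip_bit_iff)

lemma bit_phase_label:
  "bit (fst (phase_label j v)) i = bit (fst v) i"
  "bit (snd (phase_label j v)) i = (if i = j then bit (snd v) j \<noteq> bit (fst v) j else bit (snd v) i)"
  by (auto simp: phase_label_def bit_flip_bit_iff)

lemma bit_cnot_label:
  "c \<noteq> t \<Longrightarrow> bit (fst (cnot_label c t v)) i = (if i = t then bit (fst v) t \<noteq> bit (fst v) c else bit (fst v) i)"
  "c \<noteq> t \<Longrightarrow> bit (snd (cnot_label c t v)) i = (if i = c then bit (snd v) c \<noteq> bit (snd v) t else bit (snd v) i)"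
  by (auto simp: cnot_label_def bit_flip_bit_iff)

lemma had_conj_pauli:
  assumes j: "j < m"
  shows "had_conj j (pauli m v) = (\<lambda>r c. had_sign j v * pauli m (had_label j v) r c)"
proof -
  have "(\<lambda>i. pauli1 (bit (fst v) i) (bit (snd v) i))(j := pauli1 (bit (snd v) j) (bit (fst v) j))
      = (\<lambda>i. pauli1 (bit (fst (had_label j v)) i) (bit (snd (had_label j v)) i))"
    by (intro ext) (simp add: bit_had_label)
  then show ?thesis
    unfolding pauli_def had_conj_tensor_op[OF j]
    by (intro ext) (simp add: had_conj1_pauli1 had_sign_def tensor_op_fun_upd_scale[OF j])
qed

lemma phase_conj_pauli:
  assumes j: "j < m"
  shows "phase_conj j (pauli m v) = (\<lambda>r c. phase_sign j v * pauli m (phase_label j v) r c)"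
proof -
  have "(\<lambda>i. pauli1 (bit (fst v) i) (bit (snd v) i))(j := pauli1 (bit (fst v) j) (bit (snd v) j \<noteq> bit (fst v) j))
      = (\<lambda>i. pauli1 (bit (fst (phase_label j v)) i) (bit (snd (phase_label j v)) i))"
    by (intro ext) (simp add: bit_phase_label)
  then show ?thesis
    unfolding pauli_def phase_conj_tensor_op[OF j]
    by (intro ext) (simp add: phase_conj1_pauli1 phase_sign_def tensor_op_fun_upd_scale[OF j])
qed

lemma pauli_cnot_index:
  assumes "c < m" "t < m" "c \<noteq> t"
  shows "pauli m v (cnot_index c t r) (cnot_index c t d) = pauli m (cnot_label c t v) r d"
  unfolding pauli_def
  by (rule tensor_op_cnot_index[OF assms])
     (use assms cnot_conj_pauli1 in \<open>simp_all add: bit_cnot_label\<close>)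


definition pauli_labels :: "nat \<Rightarrow> (nat \<times> nat) set" where
  "pauli_labels m = {v. fst v < 2^m \<and> snd v < 2^m}"

definition xor_pair :: "nat \<times> nat \<Rightarrow> nat \<times> nat \<Rightarrow> nat \<times> nat" where
  "xor_pair u v = (xor (fst u) (fst v), xor (snd u) (snd v))"

text \<open>Over \<open>GF(2)\<close>, closure under \<open>u + v + w\<close> characterises (possibly empty) affine subspaces.\<close>

definition xor_affine :: "(nat \<times> nat) set \<Rightarrow> bool" where
  "xor_affine V \<longleftrightarrow> (\<forall>u\<in>V. \<forall>v\<in>V. \<forall>w\<in>V. xor_pair u (xor_pair v w) \<in> V)"

definition has_pauli_expansion :: "nat \<Rightarrow> qvec \<Rightarrow> bool" where
  "has_pauli_expansion m \<phi> \<longleftrightarrow> (\<exists>V s. V \<subseteq> pauli_labels m \<and> card V = 2^m \<and> xor_affine V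
      \<and> (\<forall>v\<in>V. cmod (s v) \<le> 1) \<and> density \<phi> = (\<lambda>r c. (\<Sum>v\<in>V. s v * pauli m v r c) / 2^m))"

lemma finite_pauli_labels: "finite (pauli_labels m)"
  by (rule finite_subset[of _ "{..<2^m} \<times> {..<2^m}"]) (auto simp: pauli_labels_def)

lemma prod_eq_by_bits:
  "(\<And>i. bit (fst u) i = bit (fst v) i) \<Longrightarrow> (\<And>i. bit (snd u) i = bit (snd v) i) \<Longrightarrow> u = (v::nat \<times> nat)"
  by (simp add: prod_eq_iff bit_eq_iff)

lemma had_label_involution: "had_label j (had_label j v) = v"
  by (rule prod_eq_by_bits) (auto simp: bit_had_label)

lemma had_label_xor_pair: "had_label j (xor_pair u v) = xor_pair (had_label j u) (had_label j v)"
  by (rule prod_eq_by_bits) (auto simp: bit_had_label xor_pair_def bit_xor_iff)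

lemma had_label_in_pauli_labels: "j < m \<Longrightarrow> v \<in> pauli_labels m \<Longrightarrow> had_label j v \<in> pauli_labels m"
  by (auto simp: pauli_labels_def less_two_power_iff_bits bit_had_label)

lemma phase_label_involution: "phase_label j (phase_label j v) = v"
  by (rule prod_eq_by_bits) (auto simp: bit_phase_label)

lemma phase_label_xor_pair: "phase_label j (xor_pair u v) = xor_pair (phase_label j u) (phase_label j v)"
  by (rule prod_eq_by_bits) (auto simp: bit_phase_label xor_pair_def bit_xor_iff)

lemma phase_label_in_pauli_labels: "j < m \<Longrightarrow> v \<in> pauli_labels m \<Longrightarrow> phase_label j v \<in> pauli_labels m"
  by (auto simp: pauli_labels_def less_two_power_iff_bits bit_phase_label)

lemma cnot_label_involution: "c \<noteq> t \<Longrightarrow> cnot_label c t (cnot_label c t v) = v"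
  by (rule prod_eq_by_bits) (auto simp: bit_cnot_label)

lemma cnot_label_xor_pair:
  "c \<noteq> t \<Longrightarrow> cnot_label c t (xor_pair u v) = xor_pair (cnot_label c t u) (cnot_label c t v)"
  by (rule prod_eq_by_bits) (auto simp: bit_cnot_label xor_pair_def bit_xor_iff)

lemma cnot_label_in_pauli_labels:
  "c < m \<Longrightarrow> t < m \<Longrightarrow> c \<noteq> t \<Longrightarrow> v \<in> pauli_labels m \<Longrightarrow> cnot_label c t v \<in> pauli_labels m"
  by (auto simp: pauli_labels_def less_two_power_iff_bits bit_cnot_label)

lemma has_pauli_expansion_transfer:
  assumes "has_pauli_expansion m \<phi>"
    and invol: "\<And>v. L (L v) = v"
    and labels: "\<And>v. v \<in> pauli_labels m \<Longrightarrow> L v \<in> pauli_labels m"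
    and linear: "\<And>u v. L (xor_pair u v) = xor_pair (L u) (L v)"
    and unimodular: "\<And>v. cmod (\<sigma> v) = 1"
    and conj: "\<And>V s. density \<phi> = (\<lambda>r c. (\<Sum>v\<in>V. s v * pauli m v r c) / 2^m) \<Longrightarrow>
       density \<phi>' = (\<lambda>r c. (\<Sum>v\<in>V. s v * (\<sigma> v * pauli m (L v) r c)) / 2^m)"
  shows "has_pauli_expansion m \<phi>'"
proof -
  obtain V s where V: "V \<subseteq> pauli_labels m" "card V = 2^m" "xor_affine V" "\<forall>v\<in>V. cmod (s v) \<le> 1"
    and exp: "density \<phi> = (\<lambda>r c. (\<Sum>v\<in>V. s v * pauli m v r c) / 2^m)"
    using assms(1) unfolding has_pauli_expansion_def by blast
  have inj: "inj_on L A" for A by (metis inj_onI invol)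
  define s' where "s' w = s (L w) * \<sigma> (L w)" for w
  have "density \<phi>' = (\<lambda>r c. (\<Sum>w\<in>L ` V. s' w * pauli m w r c) / 2^m)"
    unfolding conj[OF exp] by (intro ext) (simp add: sum.reindex[OF inj] s'_def invol mult_ac)
  moreover have "L ` V \<subseteq> pauli_labels m" using V(1) labels by auto
  moreover have "card (L ` V) = 2^m" using V(2) card_image[OF inj] by simp
  moreover have "xor_affine (L ` V)"
    using V(3) unfolding xor_affine_def by (auto simp flip: linear)
  moreover have "\<forall>w\<in>L ` V. cmod (s' w) \<le> 1"
    using V(4) by (auto simp: s'_def norm_mult unimodular invol)
  ultimately show ?thesis unfolding has_pauli_expansion_def by blast
qed

lemma has_pauli_expansion_ket0: "has_pauli_expansion m ket0"
proof -
  define V where "V = (\<lambda>z. (0::nat, z)) ` {..<(2::nat)^m}"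
  have inj: "inj_on (\<lambda>z. (0::nat, z)) A" for A by (simp add: inj_on_def)
  have "density ket0 = (\<lambda>r c. (\<Sum>v\<in>V. 1 * pauli m v r c) / 2^m)"
  proof (intro ext)
    fix r c
    show "density ket0 r c = (\<Sum>v\<in>V. 1 * pauli m v r c) / 2^m"
    proof (cases "r < 2^m \<and> c < 2^m")
      case True
      have "(\<Sum>v\<in>V. 1 * pauli m v r c) = (\<Sum>z<(2::nat)^m. \<Prod>i<m. pauli1 False (bit z i) (bit r i) (bit c i))"
        unfolding V_def using True by (simp add: sum.reindex[OF inj] pauli_def tensor_op_def)
      also have "\<dots> = (\<Prod>i<m. pauli1 False False (bit r i) (bit c i) + pauli1 False True (bit r i) (bit c i))"
        by (rule sum_prod_bits)
      also have "\<dots> = (\<Prod>i<m. if \<not> bit r i \<and> \<not> bit c i then 2 else 0)"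
        by (rule prod.cong) (auto simp: pauli1_def)
      also have "\<dots> = (if r = 0 \<and> c = 0 then 2^m else 0)"
        using True eq_zero_iff_low_bits[of r m] eq_zero_iff_low_bits[of c m] by auto
      finally show ?thesis by (auto simp: density_def ket0_def)
    next
      case False
      then have "r \<noteq> 0 \<or> c \<noteq> 0" by (metis zero_less_numeral zero_less_power)
      with False show ?thesis by (auto simp: density_def ket0_def pauli_def tensor_op_def)
    qed
  qed
  moreover have "V \<subseteq> pauli_labels m" "card V = 2^m" "xor_affine V"
    by (auto simp: V_def pauli_labels_def card_image[OF inj] xor_affine_def xor_pair_def xor_less_two_power)
  ultimately show ?thesis unfolding has_pauli_expansion_def by (intro exI[of _ V] exI[of _ "\<lambda>_. 1"]) auto
qed

lemma has_pauli_expansion_stab_state: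
  "\<phi> \<in> stab_states m \<Longrightarrow> has_pauli_expansion m \<phi>"
proof (induction rule: stab_states.induct)
  case base
  show ?case by (rule has_pauli_expansion_ket0)
next
  case (had \<psi> j)
  show ?case
  proof (rule has_pauli_expansion_transfer[OF had.IH, where L = "had_label j" and \<sigma> = "had_sign j"])
    fix V s assume "density \<psi> = (\<lambda>r c. (\<Sum>v\<in>V. s v * pauli m v r c) / 2^m)"
    then show "density (hadamard j \<psi>) = (\<lambda>r c. (\<Sum>v\<in>V. s v * (had_sign j v * pauli m (had_label j v) r c)) / 2^m)"
      by (simp add: density_hadamard had_conj_sum had_conj_pauli[OF had.hyps(2)])
  qed (use had.hyps in \<open>auto simp: had_label_involution had_label_xor_pair
         had_label_in_pauli_labels had_sign_def\<close>)
next
  case (phs \<psi> j)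
  show ?case
  proof (rule has_pauli_expansion_transfer[OF phs.IH, where L = "phase_label j" and \<sigma> = "phase_sign j"])
    fix V s assume "density \<psi> = (\<lambda>r c. (\<Sum>v\<in>V. s v * pauli m v r c) / 2^m)"
    then show "density (phase_gate j \<psi>) = (\<lambda>r c. (\<Sum>v\<in>V. s v * (phase_sign j v * pauli m (phase_label j v) r c)) / 2^m)"
      by (simp add: density_phase_gate phase_conj_sum phase_conj_pauli[OF phs.hyps(2)])
  qed (use phs.hyps in \<open>auto simp: phase_label_involution phase_label_xor_pair
         phase_label_in_pauli_labels phase_sign_def\<close>)
next
  case (cx \<psi> c t)
  show ?case
  proof (rule has_pauli_expansion_transfer[OF cx.IH, where L = "cnot_label c t" and \<sigma> = "\<lambda>_. 1"])
    fix V s assume exp: "density \<psi> = (\<lambda>r c. (\<Sum>v\<in>V. s v * pauli m v r c) / 2^m)"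
    show "density (cnot c t \<psi>) = (\<lambda>r d. (\<Sum>v\<in>V. s v * (1 * pauli m (cnot_label c t v) r d)) / 2^m)"
      by (intro ext) (simp add: density_cnot exp pauli_cnot_index[OF cx.hyps(2-4)])
  qed (use cx.hyps in \<open>auto simp: cnot_label_involution cnot_label_xor_pair
         cnot_label_in_pauli_labels\<close>)
qed


section \<open>Summing Pauli weights of the \<open>T\<close>-state over affine label sets\<close>

definition half_sqrt2 :: real where
  "half_sqrt2 = sqrt 2 / 2"

text \<open>\<open>T_weight1 \<alpha> \<beta>\<close> is \<open>|\<langle>T|X\<^sup>\<alpha> Z\<^sup>\<beta>|T\<rangle>|\<close>, see \<open>cmod_expectation_pauli1_T\<close> below.\<close>

definition T_weight1 :: "bool \<Rightarrow> bool \<Rightarrow> real" where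
  "T_weight1 \<alpha> \<beta> = (if \<alpha> then half_sqrt2 else if \<beta> then 0 else 1)"

definition T_weight :: "nat \<Rightarrow> nat \<times> nat \<Rightarrow> real" where
  "T_weight m v = (\<Prod>i<m. T_weight1 (bit (fst v) i) (bit (snd v) i))"

lemma half_sqrt2_bounds: "0 \<le> half_sqrt2" "half_sqrt2 \<le> 1"
proof -
  have "sqrt 2 \<le> (2::real)" using real_sqrt_le_mono[of 2 4] by (simp add: real_sqrt_four)
  then show "0 \<le> half_sqrt2" "half_sqrt2 \<le> 1" by (simp_all add: half_sqrt2_def)
qed

lemma T_weight1_bounds: "0 \<le> T_weight1 \<alpha> \<beta>" "T_weight1 \<alpha> \<beta> \<le> 1"
  using half_sqrt2_bounds by (simp_all add: T_weight1_def)

definition xor_letter :: "bool \<times> bool \<Rightarrow> bool \<times> bool \<Rightarrow> bool \<times> bool" where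
  "xor_letter x y = (fst x \<noteq> fst y, snd x \<noteq> snd y)"

lemma T_weight1_affine_sum_le:
  fixes T :: "(bool \<times> bool) set"
  assumes "T \<noteq> {}" and affine: "\<forall>x\<in>T. \<forall>y\<in>T. \<forall>z\<in>T. xor_letter x (xor_letter y z) \<in> T"
  shows "\<exists>j. card T = 2^j \<and> (\<Sum>(\<alpha>, \<beta>)\<in>T. T_weight1 \<alpha> \<beta>) \<le> (1 + half_sqrt2)^j"
proof -
  have four: "(UNIV :: (bool \<times> bool) set) = {(False,False), (False,True), (True,False), (True,True)}"
    by auto
  have "card T \<le> card (UNIV :: (bool \<times> bool) set)" by (rule card_mono) simp_all
  also have "\<dots> = 4" by (simp add: four)
  finally have "card T \<le> 4" .
  moreover have "card T \<noteq> 0" using assms(1) by simp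
  moreover have "card T \<noteq> 3"
  proof
    assume "card T = 3"
    then obtain x y z where T: "T = {x, y, z}" "x \<noteq> y" "y \<noteq> z" "x \<noteq> z"
      unfolding card_3_iff by blast
    then have "xor_letter x (xor_letter y z) \<in> {x, y, z}" using affine by blast
    with T show False by (auto simp: xor_letter_def prod_eq_iff)
  qed
  ultimately consider "card T = 1" | "card T = 2" | "card T = 4" by linarith
  then show ?thesis
  proof cases
    case 1
    then obtain x where "T = {x}" by (elim card_1_singletonE)
    then show ?thesis by (intro exI[of _ 0]) (auto simp: T_weight1_bounds case_prod_beta)
  next
    case 2
    then obtain x y where T: "T = {x, y}" "x \<noteq> y" unfolding card_2_iff by blast
    then have "T_weight1 (fst x) (snd x) + T_weight1 (fst y) (snd y) \<le> 1 + half_sqrt2"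
      using half_sqrt2_bounds by (auto simp: T_weight1_def prod_eq_iff)
    with T show ?thesis by (intro exI[of _ 1]) (simp add: case_prod_beta)
  next
    case 3
    then have "T = UNIV" using card_subset_eq[of UNIV T] subset_UNIV[of T] by (simp add: four)
    then have "(\<Sum>(\<alpha>, \<beta>)\<in>T. T_weight1 \<alpha> \<beta>) = 1 + 2 * half_sqrt2"
      by (simp add: four T_weight1_def)
    also have "\<dots> \<le> (1 + half_sqrt2)^2" by (simp add: power2_eq_square algebra_simps)
    finally show ?thesis using 3 by (intro exI[of _ 2]) simp
  qed
qed

definition top_letter :: "nat \<Rightarrow> nat \<times> nat \<Rightarrow> bool \<times> bool" where
  "top_letter m v = (bit (fst v) m, bit (snd v) m)"

definition low_part :: "nat \<Rightarrow> nat \<times> nat \<Rightarrow> nat \<times> nat" where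
  "low_part m v = (take_bit m (fst v), take_bit m (snd v))"

definition slice :: "nat \<Rightarrow> (nat \<times> nat) set \<Rightarrow> bool \<times> bool \<Rightarrow> (nat \<times> nat) set" where
  "slice m V L = low_part m ` {v\<in>V. top_letter m v = L}"

lemma low_part_xor_pair: "low_part m (xor_pair u v) = xor_pair (low_part m u) (low_part m v)"
  by (simp add: low_part_def xor_pair_def take_bit_xor)

lemma top_letter_xor_pair: "top_letter m (xor_pair u v) = xor_letter (top_letter m u) (top_letter m v)"
  by (simp add: top_letter_def xor_pair_def xor_letter_def bit_xor_iff)

lemma slice_subset_pauli_labels: "slice m V L \<subseteq> pauli_labels m"
  by (auto simp: slice_def low_part_def pauli_labels_def)

lemma inj_on_low_part:
  assumes "V \<subseteq> pauli_labels (Suc m)"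
  shows "inj_on (low_part m) {v\<in>V. top_letter m v = L}"
proof (rule inj_onI)
  fix u v assume u: "u \<in> {v\<in>V. top_letter m v = L}" and v: "v \<in> {v\<in>V. top_letter m v = L}"
    and eq: "low_part m u = low_part m v"
  have high: "\<not> bit (fst w) i" "\<not> bit (snd w) i" if "w \<in> V" "Suc m \<le> i" for w i
  proof -
    from \<open>w \<in> V\<close> assms have "\<forall>i\<ge>Suc m. \<not> bit (fst w) i" "\<forall>i\<ge>Suc m. \<not> bit (snd w) i"
      by (auto simp only: pauli_labels_def mem_Collect_eq less_two_power_iff_bits)
    with \<open>Suc m \<le> i\<close> show "\<not> bit (fst w) i" "\<not> bit (snd w) i" by blast+
  qed
  have "bit (fst u) i = bit (fst v) i \<and> bit (snd u) i = bit (snd v) i" for i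
  proof (cases "i < m")
    case True
    then show ?thesis using arg_cong[OF eq, of "\<lambda>x. (bit (fst x) i, bit (snd x) i)"]
      by (simp add: low_part_def bit_take_bit_iff)
  next
    case False
    then show ?thesis
      using u v high[of u i] high[of v i] by (cases "i = m") (auto simp: top_letter_def)
  qed
  then show "u = v" by (intro prod_eq_by_bits) auto
qed

lemma xor_affine_slice:
  assumes "xor_affine V"
  shows "xor_affine (slice m V L)"
  unfolding xor_affine_def
proof (intro ballI)
  fix x y z assume "x \<in> slice m V L" "y \<in> slice m V L" "z \<in> slice m V L"
  then obtain u v w where uvw: "u \<in> V" "v \<in> V" "w \<in> V"
    "top_letter m u = L" "top_letter m v = L" "top_letter m w = L"
    and "x = low_part m u" "y = low_part m v" "z = low_part m w"
    by (auto simp: slice_def)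
  then have "xor_pair x (xor_pair y z) = low_part m (xor_pair u (xor_pair v w))"
    by (simp add: low_part_xor_pair)
  moreover have "xor_pair u (xor_pair v w) \<in> V"
    using assms uvw unfolding xor_affine_def by blast
  moreover have "top_letter m (xor_pair u (xor_pair v w)) = L"
    using uvw by (auto simp: top_letter_xor_pair xor_letter_def)
  ultimately show "xor_pair x (xor_pair y z) \<in> slice m V L"
    unfolding slice_def by blast
qed


lemma card_slice_le:
  assumes "xor_affine V" and "L \<in> top_letter m ` V" and "L' \<in> top_letter m ` V"
  shows "card (slice m V L) \<le> card (slice m V L')"
proof -
  obtain v0 v1 where v0: "v0 \<in> V" "top_letter m v0 = L" and v1: "v1 \<in> V" "top_letter m v1 = L'"
    using assms(2,3) by blast
  define shift where "shift u = xor_pair u (low_part m (xor_pair v0 v1))" for u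
  have "inj_on shift (slice m V L)"
    by (rule inj_onI) (auto simp: shift_def xor_pair_def prod_eq_iff dest: xor_right_cancel)
  moreover have "shift ` slice m V L \<subseteq> slice m V L'"
  proof
    fix y assume "y \<in> shift ` slice m V L"
    then obtain v where v: "v \<in> V" "top_letter m v = L" "y = shift (low_part m v)"
      by (auto simp: slice_def)
    have "xor_pair v (xor_pair v0 v1) \<in> V"
      using assms(1) v v0 v1 unfolding xor_affine_def by blast
    moreover have "top_letter m (xor_pair v (xor_pair v0 v1)) = L'"
      using v v0 v1 by (auto simp: top_letter_xor_pair xor_letter_def prod_eq_iff)
    moreover have "low_part m (xor_pair v (xor_pair v0 v1)) = y"
      using v(3) by (simp add: shift_def low_part_xor_pair)
    ultimately show "y \<in> slice m V L'" unfolding slice_def by blast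
  qed
  ultimately show ?thesis
    using card_inj_on_le finite_subset[OF slice_subset_pauli_labels finite_pauli_labels] by blast
qed

lemma T_weight_Suc:
  "T_weight (Suc m) v = T_weight m (low_part m v) * (case top_letter m v of (\<alpha>, \<beta>) \<Rightarrow> T_weight1 \<alpha> \<beta>)"
proof -
  have "(\<Prod>i<m. T_weight1 (bit (fst v) i) (bit (snd v) i)) = T_weight m (low_part m v)"
    unfolding T_weight_def by (rule prod.cong) (auto simp: low_part_def bit_take_bit_iff)
  then show ?thesis by (simp add: T_weight_def top_letter_def)
qed

lemma sum_over_slices:
  fixes g :: "nat \<times> nat \<Rightarrow> 'a::comm_monoid_add"
  assumes "V \<subseteq> pauli_labels (Suc m)"
  shows "(\<Sum>v\<in>V. g v) = (\<Sum>L\<in>top_letter m ` V. \<Sum>v\<in>{v\<in>V. top_letter m v = L}. g v)"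
  using finite_subset[OF assms finite_pauli_labels] by (rule sum.image_gen)

lemma card_eq_sum_card_slices:
  assumes "V \<subseteq> pauli_labels (Suc m)"
  shows "card V = (\<Sum>L\<in>top_letter m ` V. card (slice m V L))"
  using sum_over_slices[OF assms, of "\<lambda>_. 1::nat"]
  by (simp add: slice_def card_image[OF inj_on_low_part[OF assms]])

lemma sum_T_weight_Suc:
  assumes "V \<subseteq> pauli_labels (Suc m)"
  shows "(\<Sum>v\<in>V. T_weight (Suc m) v)
       = (\<Sum>(\<alpha>, \<beta>)\<in>top_letter m ` V. T_weight1 \<alpha> \<beta> * (\<Sum>u\<in>slice m V (\<alpha>, \<beta>). T_weight m u))"
  unfolding sum_over_slices[OF assms]
proof (rule sum.cong[OF refl], clarify)
  fix \<alpha> \<beta>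
  have "(\<Sum>v\<in>{v\<in>V. top_letter m v = (\<alpha>, \<beta>)}. T_weight (Suc m) v)
      = (\<Sum>v\<in>{v\<in>V. top_letter m v = (\<alpha>, \<beta>)}. T_weight1 \<alpha> \<beta> * T_weight m (low_part m v))"
    by (rule sum.cong) (auto simp: T_weight_Suc)
  then show "(\<Sum>v\<in>{v\<in>V. top_letter m v = (\<alpha>, \<beta>)}. T_weight (Suc m) v)
      = T_weight1 \<alpha> \<beta> * (\<Sum>u\<in>slice m V (\<alpha>, \<beta>). T_weight m u)"
    by (simp add: slice_def sum.reindex[OF inj_on_low_part[OF assms]] sum_distrib_left)
qed

text \<open>Splitting off the top qubit, the letters occurring in \<open>V\<close> form an affine set of letters
  and all slices are translates of one affine set, so the bound multiplies.\<close>

lemma affine_sum_T_weight_le: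
  "V \<subseteq> pauli_labels m \<Longrightarrow> xor_affine V \<Longrightarrow> V \<noteq> {} \<Longrightarrow>
   \<exists>k. card V = 2^k \<and> (\<Sum>v\<in>V. T_weight m v) \<le> (1 + half_sqrt2)^k"
proof (induction m arbitrary: V)
  case 0
  then have "V = {(0, 0)}" by (auto simp: pauli_labels_def prod_eq_iff)
  then show ?case by (intro exI[of _ 0]) (simp add: T_weight_def)
next
  case (Suc m)
  let ?T = "top_letter m ` V"
  obtain L0 where L0: "L0 \<in> ?T" using Suc.prems(3) by blast
  have slice_ne: "slice m V L \<noteq> {}" if "L \<in> ?T" for L
    using that by (auto simp: slice_def)
  obtain k where k: "card (slice m V L0) = 2^k"
    using Suc.IH[OF slice_subset_pauli_labels xor_affine_slice[OF Suc.prems(2)] slice_ne[OF L0]] by blast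
  have card_slice: "card (slice m V L) = 2^k" if "L \<in> ?T" for L
    using card_slice_le[OF Suc.prems(2) that L0] card_slice_le[OF Suc.prems(2) L0 that] k by simp
  have slice_bound: "(\<Sum>u\<in>slice m V L. T_weight m u) \<le> (1 + half_sqrt2)^k" if "L \<in> ?T" for L
    using Suc.IH[OF slice_subset_pauli_labels xor_affine_slice[OF Suc.prems(2)] slice_ne[OF that]]
      card_slice[OF that] by auto
  have "\<forall>x\<in>?T. \<forall>y\<in>?T. \<forall>z\<in>?T. xor_letter x (xor_letter y z) \<in> ?T"
    using Suc.prems(2) unfolding xor_affine_def by (auto simp flip: top_letter_xor_pair)
  then obtain j where j: "card ?T = 2^j" "(\<Sum>(\<alpha>, \<beta>)\<in>?T. T_weight1 \<alpha> \<beta>) \<le> (1 + half_sqrt2)^j"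
    using T_weight1_affine_sum_le[of ?T] L0 by blast
  have "card V = 2^(j + k)"
    by (simp add: card_eq_sum_card_slices[OF Suc.prems(1)] card_slice j(1) power_add)
  moreover have "(\<Sum>v\<in>V. T_weight (Suc m) v) \<le> (\<Sum>(\<alpha>, \<beta>)\<in>?T. T_weight1 \<alpha> \<beta> * (1 + half_sqrt2)^k)"
    unfolding sum_T_weight_Suc[OF Suc.prems(1)]
  proof (rule sum_mono)
    fix L assume L: "L \<in> ?T"
    show "(case L of (\<alpha>, \<beta>) \<Rightarrow> T_weight1 \<alpha> \<beta> * (\<Sum>u\<in>slice m V (\<alpha>, \<beta>). T_weight m u))
        \<le> (case L of (\<alpha>, \<beta>) \<Rightarrow> T_weight1 \<alpha> \<beta> * (1 + half_sqrt2)^k)"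
      using slice_bound[OF L] T_weight1_bounds by (cases L) (auto intro: mult_left_mono)
  qed
  moreover have "\<dots> \<le> (1 + half_sqrt2)^j * (1 + half_sqrt2)^k"
    using mult_right_mono[OF j(2), of "(1 + half_sqrt2)^k"] half_sqrt2_bounds
    by (simp add: sum_distrib_right case_prod_beta)
  ultimately show ?case by (intro exI[of _ "j + k"]) (simp add: power_add)
qed


section \<open>Product states and the \<open>T\<close>-state\<close>

definition product_state :: "nat \<Rightarrow> (nat \<Rightarrow> bool \<Rightarrow> complex) \<Rightarrow> qvec" where
  "product_state m g x = (if x < 2^m then \<Prod>i<m. g i (bit x i) else 0)"

lemma product_state_cong:
  "(\<And>i. i < m \<Longrightarrow> g i = g' i) \<Longrightarrow> product_state m g = product_state m g'"
  unfolding product_state_def by (intro ext) (auto intro!: prod.cong)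

lemma inner_q_product_state:
  "inner_q m (product_state m g) (product_state m h)
     = (\<Prod>i<m. cnj (g i False) * h i False + cnj (g i True) * h i True)"
proof -
  have "inner_q m (product_state m g) (product_state m h)
      = (\<Sum>x<(2::nat)^m. \<Prod>i<m. cnj (g i (bit x i)) * h i (bit x i))"
    unfolding inner_q_def by (intro sum.cong refl) (simp add: product_state_def cnj_prod prod.distrib)
  also have "\<dots> = (\<Prod>i<m. cnj (g i False) * h i False + cnj (g i True) * h i True)"
    by (rule sum_prod_bits)
  finally show ?thesis .
qed

lemma product_state_expand:
  assumes "\<And>i \<beta>. g i \<beta> = c i False * h i False \<beta> + c i True * h i True \<beta>"
  shows "product_state m g = (\<lambda>x. \<Sum>s<(2::nat)^m. (\<Prod>i<m. c i (bit s i)) * product_state m (\<lambda>i. h i (bit s i)) x)"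
proof (intro ext)
  fix x :: nat
  show "product_state m g x = (\<Sum>s<(2::nat)^m. (\<Prod>i<m. c i (bit s i)) * product_state m (\<lambda>i. h i (bit s i)) x)"
  proof (cases "x < 2^m")
    case True
    have "(\<Sum>s<(2::nat)^m. (\<Prod>i<m. c i (bit s i)) * product_state m (\<lambda>i. h i (bit s i)) x)
        = (\<Sum>s<(2::nat)^m. \<Prod>i<m. c i (bit s i) * h i (bit s i) (bit x i))"
      using True by (simp add: product_state_def prod.distrib)
    also have "\<dots> = (\<Prod>i<m. c i False * h i False (bit x i) + c i True * h i True (bit x i))"
      by (rule sum_prod_bits)
    finally show ?thesis using True by (simp add: product_state_def assms)
  qed (simp add: product_state_def)
qed

definition expectation :: "nat \<Rightarrow> qop \<Rightarrow> qvec \<Rightarrow> complex" where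
  "expectation m A \<psi> = (\<Sum>r<(2::nat)^m. \<Sum>c<(2::nat)^m. cnj (\<psi> c) * A c r * \<psi> r)"

lemma expectation_tensor_op_product_state:
  "expectation m (tensor_op m f) (product_state m g)
     = (\<Prod>i<m. \<Sum>\<rho>\<in>UNIV. \<Sum>\<gamma>\<in>UNIV. cnj (g i \<gamma>) * f i \<gamma> \<rho> * g i \<rho>)"
proof -
  let ?h = "\<lambda>i \<rho> \<gamma>. cnj (g i \<gamma>) * f i \<gamma> \<rho> * g i \<rho>"
  have "expectation m (tensor_op m f) (product_state m g)
      = (\<Sum>r<(2::nat)^m. \<Sum>c<(2::nat)^m. \<Prod>i<m. ?h i (bit r i) (bit c i))"
    unfolding expectation_def
    by (intro sum.cong refl) (simp add: tensor_op_def product_state_def cnj_prod prod.distrib)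
  also have "\<dots> = (\<Sum>r<(2::nat)^m. \<Prod>i<m. ?h i (bit r i) False + ?h i (bit r i) True)"
    by (intro sum.cong refl) (rule sum_prod_bits)
  also have "\<dots> = (\<Prod>i<m. (?h i False False + ?h i False True) + (?h i True False + ?h i True True))"
    by (rule sum_prod_bits)
  finally show ?thesis by (simp add: UNIV_bool add_ac)
qed

definition T_amp :: "bool \<Rightarrow> complex" where
  "T_amp \<beta> = (if \<beta> then Complex (1/2) (1/2) else Complex (sqrt 2 / 2) 0)"

lemma T_state_eq_T_amp: "T_state 0 = T_amp False" "T_state 1 = T_amp True"
proof -
  have "1 / sqrt 2 = sqrt 2 / (2::real)" by (simp add: field_simps)
  then have "1 / complex_of_real (sqrt 2) = complex_of_real (sqrt 2 / 2)"
    by (metis of_real_1 of_real_divide)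
  then show "T_state 0 = T_amp False" by (simp add: T_state_def T_amp_def complex_of_real_def)
  have "cis (pi/4) / complex_of_real (sqrt 2) = Complex (1/2) (1/2)"
    by (simp add: complex_eq_iff cos_45 sin_45 Re_divide_of_real Im_divide_of_real)
  then show "T_state 1 = T_amp True" by (simp add: T_state_def T_amp_def)
qed

lemma T_pow_eq_product_state: "T_pow m = product_state m (\<lambda>_. T_amp)"
proof (induction m)
  case 0
  show ?case by (auto simp: ket0_def product_state_def)
next
  case (Suc m)
  show ?case
  proof (intro ext)
    fix x :: nat
    have low: "(\<Prod>i<m. T_amp (bit (x mod 2^m) i)) = (\<Prod>i<m. T_amp (bit x i))"
      by (rule prod.cong) (auto simp: take_bit_eq_mod[symmetric] bit_take_bit_iff)
    have "T_state (x div 2^m) = (if x < 2^Suc m then T_amp (bit x m) else 0)"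
    proof (cases "x < 2^Suc m")
      case True
      then have "x div 2^m < 2" by (simp add: less_mult_imp_div_less mult.commute)
      then have "x div 2^m = 0 \<or> x div 2^m = 1" by linarith
      then show ?thesis using True T_state_eq_T_amp by (auto simp: bit_iff_odd)
    next
      case False
      then have "2 \<le> x div 2^m" by (simp add: le_div_geq mult.commute div_le_mono[of "2*2^m" x "2^m", simplified])
      with False show ?thesis by (simp add: T_state_def)
    qed
    then show "T_pow (Suc m) x = product_state (Suc m) (\<lambda>_. T_amp) x"
      using Suc.IH low by (simp add: product_state_def prod.lessThan_Suc)
  qed
qed

lemma inner_q_T_pow: "inner_q m (T_pow m) (T_pow m) = 1"
proof -
  have "cnj (T_amp False) * T_amp False + cnj (T_amp True) * T_amp True = 1"
    by (simp add: T_amp_def complex_eq_iff power2_eq_square)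
  then show ?thesis by (simp add: T_pow_eq_product_state inner_q_product_state)
qed


section \<open>The stabilizer fidelity of \<open>T\<^sup>\<otimes>\<^sup>m\<close>\<close>

lemma expectation_density:
  "complex_of_real (cmod (inner_q m \<phi> \<psi>)^2) = expectation m (density \<phi>) \<psi>"
proof -
  have "complex_of_real (cmod (inner_q m \<phi> \<psi>)^2) = inner_q m \<phi> \<psi> * cnj (inner_q m \<phi> \<psi>)"
    by (rule complex_norm_square)
  also have "\<dots> = expectation m (density \<phi>) \<psi>"
    unfolding inner_q_def expectation_def density_def
    by (simp add: sum_product cnj_sum mult_ac) (rule sum.swap)
  finally show ?thesis .
qed

lemma expectation_sum:
  "expectation m (\<lambda>r c. (\<Sum>v\<in>V. s v * K v r c) / D) \<psi> = (\<Sum>v\<in>V. s v * expectation m (K v) \<psi>) / D"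
proof -
  have "expectation m (\<lambda>r c. (\<Sum>v\<in>V. s v * K v r c) / D) \<psi>
      = (\<Sum>r<(2::nat)^m. \<Sum>c<(2::nat)^m. \<Sum>v\<in>V. s v * (cnj (\<psi> c) * K v c r * \<psi> r) / D)"
    unfolding expectation_def
    by (intro sum.cong refl) (simp add: sum_distrib_left sum_distrib_right sum_divide_distrib mult_ac)
  also have "\<dots> = (\<Sum>v\<in>V. \<Sum>r<(2::nat)^m. \<Sum>c<(2::nat)^m. s v * (cnj (\<psi> c) * K v c r * \<psi> r) / D)"
    by (subst sum.swap, subst (2) sum.swap) (rule refl)
  finally show ?thesis
    by (simp add: expectation_def sum_distrib_left sum_divide_distrib)
qed

lemma stab_overlap_sq_le_pauli_expectations:
  assumes "\<phi> \<in> stab_states m"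
  obtains V where "V \<subseteq> pauli_labels m" "card V = 2^m" "xor_affine V"
    "cmod (inner_q m \<phi> \<psi>)^2 \<le> (\<Sum>v\<in>V. cmod (expectation m (pauli m v) \<psi>)) / 2^m"
proof -
  obtain V s where V: "V \<subseteq> pauli_labels m" "card V = 2^m" "xor_affine V" "\<forall>v\<in>V. cmod (s v) \<le> 1"
    and exp: "density \<phi> = (\<lambda>r c. (\<Sum>v\<in>V. s v * pauli m v r c) / 2^m)"
    using has_pauli_expansion_stab_state[OF assms] unfolding has_pauli_expansion_def by blast
  have "cmod (inner_q m \<phi> \<psi>)^2 = cmod (complex_of_real (cmod (inner_q m \<phi> \<psi>)^2))"
    by (simp only: norm_of_real abs_power2)
  also have "\<dots> = cmod (\<Sum>v\<in>V. s v * expectation m (pauli m v) \<psi>) / 2^m"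
    unfolding expectation_density exp expectation_sum by (simp add: norm_divide norm_power)
  also have "\<dots> \<le> (\<Sum>v\<in>V. cmod (expectation m (pauli m v) \<psi>)) / 2^m"
    using V(4) by (intro divide_right_mono order.trans[OF norm_sum] sum_mono)
      (auto simp: norm_mult intro: mult_left_le_one_le)
  finally show ?thesis using V that by blast
qed

lemma cmod_expectation_pauli1_T:
  "cmod (\<Sum>\<rho>\<in>UNIV. \<Sum>\<gamma>\<in>UNIV. cnj (T_amp \<gamma>) * pauli1 \<alpha> \<beta> \<gamma> \<rho> * T_amp \<rho>) = T_weight1 \<alpha> \<beta>"
proof -
  have "sqrt (1/2) * 2 = sqrt (2::real)" by (simp add: real_sqrt_divide field_simps)
  then show ?thesis
    by (cases \<alpha>; cases \<beta>) (simp_all add: UNIV_bool pauli1_def T_amp_def T_weight1_def half_sqrt2_def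
        cmod_def power2_eq_square)
qed

lemma cmod_expectation_pauli_T_pow: "cmod (expectation m (pauli m v) (T_pow m)) = T_weight m v"
  by (simp add: pauli_def T_pow_eq_product_state expectation_tensor_op_product_state prod_norm[symmetric]
      cmod_expectation_pauli1_T T_weight_def)

lemma stab_overlap_T_pow_le:
  assumes "\<phi> \<in> stab_states m"
  shows "cmod (inner_q m \<phi> (T_pow m))^2 \<le> ((1 + half_sqrt2) / 2)^m"
proof -
  obtain V where V: "V \<subseteq> pauli_labels m" "card V = 2^m" "xor_affine V"
    and le: "cmod (inner_q m \<phi> (T_pow m))^2 \<le> (\<Sum>v\<in>V. T_weight m v) / 2^m"
    using stab_overlap_sq_le_pauli_expectations[OF assms, of "T_pow m"]
    by (auto simp: cmod_expectation_pauli_T_pow)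
  obtain k where "card V = 2^k" "(\<Sum>v\<in>V. T_weight m v) \<le> (1 + half_sqrt2)^k"
    using affine_sum_T_weight_le[OF V(1,3)] V(2) by fastforce
  with V(2) have "(\<Sum>v\<in>V. T_weight m v) \<le> (1 + half_sqrt2)^m" by simp
  with le show ?thesis by (simp add: power_divide divide_right_mono order.trans)
qed


section \<open>Stabilizer product states\<close>

lemma ket0_eq_product_state: "ket0 = product_state m (\<lambda>_ \<beta>. if \<beta> then 0 else 1)"
proof (intro ext)
  fix x :: nat
  show "ket0 x = product_state m (\<lambda>_ \<beta>. if \<beta> then 0 else 1) x"
  proof (cases "x < 2^m")
    case True
    then have "(\<Prod>i<m. if bit x i then 0 else 1 :: complex) = (if x = 0 then 1 else 0)"
      using eq_zero_iff_low_bits[of x m] by auto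
    with True show ?thesis by (simp add: ket0_def product_state_def)
  next
    case False
    then have "x \<noteq> 0" by (metis zero_less_numeral zero_less_power)
    with False show ?thesis by (simp add: ket0_def product_state_def)
  qed
qed

definition had1 :: "(bool \<Rightarrow> complex) \<Rightarrow> bool \<Rightarrow> complex" where
  "had1 f \<beta> = (if \<beta> then f False - f True else f False + f True) / sqrt 2"

lemma product_state_remove:
  "j < m \<Longrightarrow> x < 2^m \<Longrightarrow> product_state m g x = g j (bit x j) * (\<Prod>i\<in>{..<m}-{j}. g i (bit x i))"
  unfolding product_state_def by (simp add: prod.remove)

lemma prod_remove_fun_upd1: "(\<Prod>i\<in>A-{j}. (f(j := g)) i (X i)) = (\<Prod>i\<in>A-{j}. f i (X i))"
  by (rule prod.cong) auto

lemma hadamard_product_state: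
  assumes j: "j < m"
  shows "hadamard j (product_state m g) = product_state m (g(j := had1 (g j)))"
proof (intro ext)
  fix x
  show "hadamard j (product_state m g) x = product_state m (g(j := had1 (g j))) x"
  proof (cases "x < 2^m")
    case True
    let ?R = "\<Prod>i\<in>{..<m}-{j}. g i (bit x i)"
    have "product_state m g (put_bit j u x) = g j u * ?R" for u
    proof -
      have "(\<Prod>i\<in>{..<m}-{j}. g i (bit (put_bit j u x) i)) = ?R"
        by (rule prod.cong) (auto simp: bit_put_bit)
      then show ?thesis
        using product_state_remove[OF j] True put_bit_less_two_power_iff[OF j] by (simp add: bit_put_bit)
    qed
    moreover have "product_state m (g(j := had1 (g j))) x = had1 (g j) (bit x j) * ?R"
      using product_state_remove[OF j True, of "g(j := had1 (g j))"] by (simp add: prod_remove_fun_upd1)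
    ultimately show ?thesis
      unfolding hadamard_eq_sum
      by (cases "bit x j") (simp_all add: UNIV_bool had_entry_def had1_def algebra_simps
          add_divide_distrib diff_divide_distrib)
  next
    case False
    then show ?thesis
      using put_bit_less_two_power_iff[OF j] by (simp add: hadamard_eq_sum product_state_def)
  qed
qed

lemma phase_gate_product_state:
  assumes j: "j < m"
  shows "phase_gate j (product_state m g) = product_state m (g(j := (\<lambda>\<beta>. phase_entry \<beta> * g j \<beta>)))"
proof (intro ext)
  fix x
  show "phase_gate j (product_state m g) x = product_state m (g(j := (\<lambda>\<beta>. phase_entry \<beta> * g j \<beta>))) x"
  proof (cases "x < 2^m")
    case True
    then show ?thesis
      using product_state_remove[OF j True, of g]
        product_state_remove[OF j True, of "g(j := (\<lambda>\<beta>. phase_entry \<beta> * g j \<beta>))"]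
      by (simp add: phase_gate_def phase_entry_def prod_remove_fun_upd1)
  qed (simp add: phase_gate_def product_state_def)
qed

definition plus_amp :: "bool \<Rightarrow> complex" where
  "plus_amp \<beta> = complex_of_real half_sqrt2"

definition plus_i_amp :: "bool \<Rightarrow> complex" where
  "plus_i_amp \<beta> = phase_entry \<beta> * plus_amp \<beta>"

lemma had1_ket0: "had1 (\<lambda>\<beta>. if \<beta> then 0 else 1) = plus_amp"
proof -
  have "1 / sqrt 2 = half_sqrt2" by (simp add: half_sqrt2_def field_simps)
  then have "1 / complex_of_real (sqrt 2) = complex_of_real half_sqrt2"
    by (metis of_real_1 of_real_divide)
  then show ?thesis by (intro ext) (simp add: had1_def plus_amp_def)
qed

lemma product_state_plus_in_stab_states:
  "product_state m (\<lambda>i. if b i then plus_i_amp else plus_amp) \<in> stab_states m"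
proof -
  define g where "g k i = (if i < k then if b i then plus_i_amp else plus_amp
                           else (\<lambda>\<beta>. if \<beta> then 0 else 1))" for k i
  have "product_state m (g k) \<in> stab_states m" if "k \<le> m" for k
    using that
  proof (induction k)
    case 0
    have "product_state m (g 0) = ket0"
      unfolding ket0_eq_product_state[of m] by (rule product_state_cong) (simp add: g_def)
    then show ?case by (simp add: stab_states.base)
  next
    case (Suc k)
    then have k: "k < m" and IH: "product_state m (g k) \<in> stab_states m" by simp_all
    have "hadamard k (product_state m (g k)) = product_state m ((g k)(k := plus_amp))"
      unfolding hadamard_product_state[OF k] by (simp add: g_def had1_ket0)
    then have had: "product_state m ((g k)(k := plus_amp)) \<in> stab_states m"
      using stab_states.had[OF IH k] by simp
    show ?case
    proof (cases "b k")
      case True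
      have "phase_gate k (product_state m ((g k)(k := plus_amp))) = product_state m (g (Suc k))"
        unfolding phase_gate_product_state[OF k]
        by (rule product_state_cong) (auto simp: g_def True plus_i_amp_def)
      then show ?thesis using stab_states.phs[OF had k] by simp
    next
      case False
      have "product_state m ((g k)(k := plus_amp)) = product_state m (g (Suc k))"
        by (rule product_state_cong) (auto simp: g_def False)
      with had show ?thesis by simp
    qed
  qed
  moreover have "product_state m (g m) = product_state m (\<lambda>i. if b i then plus_i_amp else plus_amp)"
    by (rule product_state_cong) (simp add: g_def)
  ultimately show ?thesis by (metis order_refl)
qed


section \<open>Stabilizer extent and fidelity\<close>

lemma inner_q_commute: "inner_q m \<psi> \<phi> = cnj (inner_q m \<phi> \<psi>)"
  by (simp add: inner_q_def cnj_sum mult.commute)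

lemma stab_extent_lower_bound:
  fixes n :: nat
  assumes "inner_q m \<psi> \<psi> = 1" and "0 < F"
    and fidelity: "\<And>\<phi>. \<phi> \<in> stab_states m \<Longrightarrow> cmod (inner_q m \<phi> \<psi>)^2 \<le> F"
    and "\<forall>i<n. \<phi>s i \<in> stab_states m" and "\<psi> = (\<lambda>x. \<Sum>i<n. c i * \<phi>s i x)"
  shows "1 / F \<le> (\<Sum>i<n. cmod (c i))^2"
proof -
  have "1 = inner_q m \<psi> (\<lambda>x. \<Sum>i<n. c i * \<phi>s i x)"
    using assms(1,5) by simp
  also have "\<dots> = (\<Sum>i<n. c i * inner_q m \<psi> (\<phi>s i))"
    unfolding inner_q_def by (simp add: sum_distrib_left mult_ac) (rule sum.swap)
  finally have "1 \<le> (\<Sum>i<n. cmod (c i * inner_q m \<psi> (\<phi>s i)))"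
    by (metis norm_one norm_sum)
  also have "\<dots> \<le> (\<Sum>i<n. cmod (c i) * sqrt F)"
  proof (rule sum_mono)
    fix i assume "i \<in> {..<n}"
    then have "cmod (inner_q m (\<phi>s i) \<psi>) \<le> sqrt F"
      using fidelity assms(4) by (simp add: real_le_rsqrt)
    then show "cmod (c i * inner_q m \<psi> (\<phi>s i)) \<le> cmod (c i) * sqrt F"
      by (simp add: inner_q_commute[of m \<psi>] norm_mult mult_left_mono)
  qed
  finally have "1 \<le> (\<Sum>i<n. cmod (c i)) * sqrt F"
    by (simp add: sum_distrib_right)
  then have "1 \<le> ((\<Sum>i<n. cmod (c i)) * sqrt F)^2"
    by (simp add: one_le_power)
  then show ?thesis
    using \<open>0 < F\<close> by (simp add: power_mult_distrib divide_le_eq)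
qed

lemma stab_fidelity_eqI:
  assumes "\<phi> \<in> stab_states m" and "cmod (inner_q m \<phi> \<psi>)^2 = F"
    and "\<And>\<phi>'. \<phi>' \<in> stab_states m \<Longrightarrow> cmod (inner_q m \<phi>' \<psi>)^2 \<le> F"
  shows "stab_fidelity m \<psi> = F"
  unfolding stab_fidelity_def by (rule cSup_eq_maximum) (use assms in auto)

lemma stab_extent_eqI:
  fixes n :: nat
  assumes "\<forall>i<n. \<phi>s i \<in> stab_states m" and "\<psi> = (\<lambda>x. \<Sum>i<n. c i * \<phi>s i x)"
    and "(\<Sum>i<n. cmod (c i))^2 = E"
    and "\<And>(n::nat) c \<phi>s. \<forall>i<n. \<phi>s i \<in> stab_states m \<Longrightarrow> \<psi> = (\<lambda>x. \<Sum>i<n. c i * \<phi>s i x) \<Longrightarrow>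
           E \<le> (\<Sum>i<n. cmod (c i))^2"
  shows "stab_extent m \<psi> = E"
  unfolding stab_extent_def
proof (rule cInf_eq_minimum)
  show "E \<in> {(\<Sum>i<n. cmod (c i))^2 | (n::nat) (c::nat \<Rightarrow> complex) (\<phi>s::nat \<Rightarrow> qvec).
                (\<forall>i<n. \<phi>s i \<in> stab_states m) \<and> \<psi> = (\<lambda>x. \<Sum>i<n. c i * \<phi>s i x)}"
    using assms(1-3) by blast
qed (use assms(4) in blast)

lemma cos_pi_8_square: "cos (pi/8)^2 = (1 + half_sqrt2) / 2"
proof -
  have "cos (pi/4) = 2 * cos (pi/8)^2 - 1"
    using cos_double_cos[of "pi/8"] by simp
  then show ?thesis by (auto simp: cos_45 half_sqrt2_def field_simps)
qed

lemma stab_overlap_T_pow_le_cos: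
  "\<phi> \<in> stab_states m \<Longrightarrow> cmod (inner_q m \<phi> (T_pow m))^2 \<le> cos (pi/8)^(2*m)"
  using stab_overlap_T_pow_le by (simp add: power_mult cos_pi_8_square)

lemma overlap_plus_T_pow: "cmod (inner_q m (product_state m (\<lambda>_. plus_amp)) (T_pow m))^2 = cos (pi/8)^(2*m)"
proof -
  define z where "z = cnj (plus_amp False) * T_amp False + cnj (plus_amp True) * T_amp True"
  have z: "cmod z^2 = (1 + half_sqrt2) / 2"
    by (simp add: z_def plus_amp_def T_amp_def half_sqrt2_def cmod_def power2_eq_square algebra_simps)
  have "inner_q m (product_state m (\<lambda>_. plus_amp)) (T_pow m) = z^m"
    by (simp add: z_def T_pow_eq_product_state inner_q_product_state)
  then have "cmod (inner_q m (product_state m (\<lambda>_. plus_amp)) (T_pow m))^2 = (cmod z ^ 2)^m"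
    by (simp add: norm_power power_mult[symmetric] mult.commute)
  then show ?thesis
    unfolding z power_mult cos_pi_8_square .
qed

definition T_coeff :: "bool \<Rightarrow> complex" where
  "T_coeff \<sigma> = Complex (1/2) (if \<sigma> then (1 - sqrt 2) / 2 else (sqrt 2 - 1) / 2)"

lemma T_amp_decomposition: "T_amp \<beta> = T_coeff False * plus_amp \<beta> + T_coeff True * plus_i_amp \<beta>"
  by (cases \<beta>) (simp_all add: T_coeff_def T_amp_def plus_amp_def plus_i_amp_def phase_entry_def
      half_sqrt2_def complex_eq_iff field_simps)

lemma T_pow_decomposition:
  "T_pow m = (\<lambda>x. \<Sum>s<(2::nat)^m. (\<Prod>i<m. T_coeff (bit s i))
                 * product_state m (\<lambda>i. if bit s i then plus_i_amp else plus_amp) x)"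
  unfolding T_pow_eq_product_state
  by (rule product_state_expand) (simp add: T_amp_decomposition)

lemma T_coeff_l1_square: "(cmod (T_coeff False) + cmod (T_coeff True))^2 * cos (pi/8)^2 = 1"
proof -
  have "cmod (T_coeff True) = cmod (T_coeff False)"
    by (simp add: T_coeff_def cmod_def power2_eq_square algebra_simps)
  then have "(cmod (T_coeff False) + cmod (T_coeff True))^2 = 1 + (sqrt 2 - 1)^2"
    by (simp add: T_coeff_def cmod_power2 power_mult_distrib power_divide)
  moreover have "(1 + (s - 1)^2) * ((1 + s/2)/2) = 1" if "s * s = 2" for s :: real
    using that by (simp add: power2_eq_square algebra_simps)
  ultimately show ?thesis by (simp add: cos_pi_8_square half_sqrt2_def)
qed

lemma T_pow_decomposition_l1:
  "(\<Sum>s<(2::nat)^m. cmod (\<Prod>i<m. T_coeff (bit s i)))^2 = 1 / cos (pi/8)^(2*m)"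
proof -
  define Y where "Y = cmod (T_coeff False) + cmod (T_coeff True)"
  have "(\<Sum>s<(2::nat)^m. cmod (\<Prod>i<m. T_coeff (bit s i))) = Y^m"
    using sum_prod_bits[of "\<lambda>_ \<sigma>. cmod (T_coeff \<sigma>)" m] by (simp add: Y_def prod_norm[symmetric])
  then have "(\<Sum>s<(2::nat)^m. cmod (\<Prod>i<m. T_coeff (bit s i)))^2 = (Y^2)^m"
    by (simp only: power_mult[symmetric] mult.commute)
  also have "\<dots> = 1 / (cos (pi/8)^2)^m"
  proof -
    have "(cos (pi/8)^2)^m * (Y^2)^m = 1"
      using T_coeff_l1_square by (simp add: Y_def mult.commute flip: power_mult_distrib)
    then have "inverse ((cos (pi/8)^2)^m) = (Y^2)^m" by (rule inverse_unique)
    then show ?thesis by (simp only: inverse_eq_divide)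
  qed
  finally show ?thesis by (simp only: power_mult)
qed

theorem factB3:
  fixes m :: nat
  assumes "m \<ge> 1"
  shows "stab_extent m (T_pow m) = 1 / (cos (pi/8)) ^ (2*m)
       \<and> stab_fidelity m (T_pow m) = (cos (pi/8)) ^ (2*m)"
proof
  have "0 < cos (pi/8)^(2*m)"
    by (simp add: cos_gt_zero)
  then show "stab_extent m (T_pow m) = 1 / (cos (pi/8)) ^ (2*m)"
    using stab_extent_lower_bound[OF inner_q_T_pow _ stab_overlap_T_pow_le_cos]
    by (intro stab_extent_eqI[OF _ T_pow_decomposition T_pow_decomposition_l1])
      (auto intro: product_state_plus_in_stab_states)
  show "stab_fidelity m (T_pow m) = (cos (pi/8)) ^ (2*m)"
    using product_state_plus_in_stab_states[of m "\<lambda>_. False"]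
    by (intro stab_fidelity_eqI[OF _ overlap_plus_T_pow stab_overlap_T_pow_le_cos]) simp_all
qed

end
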